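(* Let $\mathcal{A},\mathcal{B}$ be abelian categories with enough projective objects and let $F\colon\mathcal{A}\to\mathcal{B}$ be left adjoint to $G\colon\mathcal{B}\to\mathcal{A}$, with both $F$ and $G$ exact. Assume $G(\mathcal{P}(\mathcal{B}))\subseteq\mathcal{P}(\mathcal{A})$. Then $\mathrm{Gpd}_\mathcal{A}(X)\ge\mathrm{Gpd}_\mathcal{B}(F(X))$ for every $X\in\mathcal{A}$; in particular $F$ sends Gorenstein projective objects to Gorenstein projective objects.
   Context: $\mathcal{P}(\mathcal{A})$ is the class of projective objects. An object is Gorenstein projective if it is isomorphic to $Z^0(P^\bullet)$ for an acyclic complex $P^\bullet$ of projectives such that $\mathrm{Hom}(P^\bullet,Q)$ is acyclic for each projective $Q$. $\mathrm{Gpd}(X)\le n$ iff there is an exact sequence $0\to M^{-n}\to\cdots\to M^0\to X\to0$ with all $M^{-i}$ Gorenstein projective. *)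

theory Defs
  imports "HOL-Algebra.Group" "HOL-Library.Extended_Nat"
begin

text \<open>A (small-or-large, set-presented) category: objects of type 'o, morphisms of
 type 'm.  hom X Y is the hom-set, cmp g f is the composite g after f, idm X the
 identity, ad the addition on hom-sets and zr X Y the zero morphism X to Y.\<close>

record ('o, 'm) cat =
  obj :: "'o set"
  hom :: "'o \<Rightarrow> 'o \<Rightarrow> 'm set"
  cmp :: "'m \<Rightarrow> 'm \<Rightarrow> 'm"
  idm :: "'o \<Rightarrow> 'm"
  ad  :: "'m \<Rightarrow> 'm \<Rightarrow> 'm"
  zr  :: "'o \<Rightarrow> 'o \<Rightarrow> 'm"

definition is_category :: "('o, 'm, 'x) cat_scheme \<Rightarrow> bool" where
  "is_category C \<longleftrightarrow>
     (\<forall>X Y Z f g. X \<in> obj C \<and> Y \<in> obj C \<and> Z \<in> obj C \<and> f \<in> hom C X Y \<and> g \<in> hom C Y Z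
        \<longrightarrow> cmp C g f \<in> hom C X Z)
   \<and> (\<forall>X \<in> obj C. idm C X \<in> hom C X X)
   \<and> (\<forall>X Y f. X \<in> obj C \<and> Y \<in> obj C \<and> f \<in> hom C X Y
        \<longrightarrow> cmp C f (idm C X) = f \<and> cmp C (idm C Y) f = f)
   \<and> (\<forall>W X Y Z f g h. W \<in> obj C \<and> X \<in> obj C \<and> Y \<in> obj C \<and> Z \<in> obj C
        \<and> f \<in> hom C W X \<and> g \<in> hom C X Y \<and> h \<in> hom C Y Z
        \<longrightarrow> cmp C h (cmp C g f) = cmp C (cmp C h g) f)
   \<and> (\<forall>X Y X' Y'. X \<in> obj C \<and> Y \<in> obj C \<and> X' \<in> obj C \<and> Y' \<in> obj C
        \<and> hom C X Y \<inter> hom C X' Y' \<noteq> {} \<longrightarrow> X = X' \<and> Y = Y')"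

definition hom_grp :: "('o, 'm, 'x) cat_scheme \<Rightarrow> 'o \<Rightarrow> 'o \<Rightarrow> 'm monoid" where
  "hom_grp C X Y = \<lparr>carrier = hom C X Y, mult = ad C, one = zr C X Y\<rparr>"

definition is_preadditive :: "('o, 'm, 'x) cat_scheme \<Rightarrow> bool" where
  "is_preadditive C \<longleftrightarrow> is_category C
   \<and> (\<forall>X \<in> obj C. \<forall>Y \<in> obj C. comm_group (hom_grp C X Y))
   \<and> (\<forall>X Y Z f f' g g'. X \<in> obj C \<and> Y \<in> obj C \<and> Z \<in> obj C
        \<and> f \<in> hom C X Y \<and> f' \<in> hom C X Y \<and> g \<in> hom C Y Z \<and> g' \<in> hom C Y Z
        \<longrightarrow> cmp C g (ad C f f') = ad C (cmp C g f) (cmp C g f')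
          \<and> cmp C (ad C g g') f = ad C (cmp C g f) (cmp C g' f))"

definition is_mono :: "('o, 'm, 'x) cat_scheme \<Rightarrow> 'o \<Rightarrow> 'o \<Rightarrow> 'm \<Rightarrow> bool" where
  "is_mono C X Y f \<longleftrightarrow> X \<in> obj C \<and> Y \<in> obj C \<and> f \<in> hom C X Y
   \<and> (\<forall>W \<in> obj C. \<forall>g \<in> hom C W X. \<forall>h \<in> hom C W X. cmp C f g = cmp C f h \<longrightarrow> g = h)"

definition is_epi :: "('o, 'm, 'x) cat_scheme \<Rightarrow> 'o \<Rightarrow> 'o \<Rightarrow> 'm \<Rightarrow> bool" where
  "is_epi C X Y f \<longleftrightarrow> X \<in> obj C \<and> Y \<in> obj C \<and> f \<in> hom C X Y
   \<and> (\<forall>W \<in> obj C. \<forall>g \<in> hom C Y W. \<forall>h \<in> hom C Y W. cmp C g f = cmp C h f \<longrightarrow> g = h)"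

definition is_kernel :: "('o, 'm, 'x) cat_scheme \<Rightarrow> 'm \<Rightarrow> 'o \<Rightarrow> 'o \<Rightarrow> 'm \<Rightarrow> 'o \<Rightarrow> bool" where
  "is_kernel C f X Y k K \<longleftrightarrow> X \<in> obj C \<and> Y \<in> obj C \<and> K \<in> obj C
   \<and> f \<in> hom C X Y \<and> k \<in> hom C K X \<and> cmp C f k = zr C K Y
   \<and> (\<forall>W \<in> obj C. \<forall>h \<in> hom C W X. cmp C f h = zr C W Y
        \<longrightarrow> (\<exists>!u. u \<in> hom C W K \<and> cmp C k u = h))"

definition is_cokernel :: "('o, 'm, 'x) cat_scheme \<Rightarrow> 'm \<Rightarrow> 'o \<Rightarrow> 'o \<Rightarrow> 'm \<Rightarrow> 'o \<Rightarrow> bool" where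
  "is_cokernel C f X Y c Q \<longleftrightarrow> X \<in> obj C \<and> Y \<in> obj C \<and> Q \<in> obj C
   \<and> f \<in> hom C X Y \<and> c \<in> hom C Y Q \<and> cmp C c f = zr C X Q
   \<and> (\<forall>W \<in> obj C. \<forall>h \<in> hom C Y W. cmp C h f = zr C X W
        \<longrightarrow> (\<exists>!u. u \<in> hom C Q W \<and> cmp C u c = h))"

definition is_abelian :: "('o, 'm, 'x) cat_scheme \<Rightarrow> bool" where
  "is_abelian C \<longleftrightarrow> is_preadditive C
   \<comment> \<open>zero object\<close>
   \<and> (\<exists>Z \<in> obj C. \<forall>X \<in> obj C. hom C Z X = {zr C Z X} \<and> hom C X Z = {zr C X Z})
   \<comment> \<open>binary biproducts\<close>
   \<and> (\<forall>X \<in> obj C. \<forall>Y \<in> obj C. \<exists>S \<in> obj C. \<exists>i1 \<in> hom C X S. \<exists>i2 \<in> hom C Y S.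
        \<exists>p1 \<in> hom C S X. \<exists>p2 \<in> hom C S Y.
          cmp C p1 i1 = idm C X \<and> cmp C p2 i2 = idm C Y
        \<and> cmp C p1 i2 = zr C Y X \<and> cmp C p2 i1 = zr C X Y
        \<and> ad C (cmp C i1 p1) (cmp C i2 p2) = idm C S)
   \<comment> \<open>kernels and cokernels\<close>
   \<and> (\<forall>X \<in> obj C. \<forall>Y \<in> obj C. \<forall>f \<in> hom C X Y.
        (\<exists>k K. is_kernel C f X Y k K) \<and> (\<exists>c Q. is_cokernel C f X Y c Q))
   \<comment> \<open>every mono is a kernel, every epi is a cokernel\<close>
   \<and> (\<forall>X Y m. is_mono C X Y m \<longrightarrow> (\<exists>Z \<in> obj C. \<exists>g \<in> hom C Y Z. is_kernel C g Y Z m X))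
   \<and> (\<forall>X Y e. is_epi C X Y e \<longrightarrow> (\<exists>Z \<in> obj C. \<exists>g \<in> hom C Z X. is_cokernel C g Z X e Y))"

text \<open>Exactness of A --f--> B --g--> C at B: gf = 0 and ker g \<subseteq> im f, the latter
 expressed as: every morphism into B killed by g is killed by the cokernel of f
 (im f = ker (coker f)).\<close>
definition exact_at :: "('o, 'm, 'x) cat_scheme \<Rightarrow> 'o \<Rightarrow> 'o \<Rightarrow> 'o \<Rightarrow> 'm \<Rightarrow> 'm \<Rightarrow> bool" where
  "exact_at C A B D f g \<longleftrightarrow> A \<in> obj C \<and> B \<in> obj C \<and> D \<in> obj C
   \<and> f \<in> hom C A B \<and> g \<in> hom C B D \<and> cmp C g f = zr C A D
   \<and> (\<forall>W \<in> obj C. \<forall>h \<in> hom C W B. \<forall>c Q. cmp C g h = zr C W D \<and> is_cokernel C f A B c Q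
        \<longrightarrow> cmp C c h = zr C W Q)"

definition is_projective :: "('o, 'm, 'x) cat_scheme \<Rightarrow> 'o \<Rightarrow> bool" where
  "is_projective C P \<longleftrightarrow> P \<in> obj C
   \<and> (\<forall>X Y e f. is_epi C X Y e \<and> f \<in> hom C P Y \<longrightarrow> (\<exists>g \<in> hom C P X. cmp C e g = f))"

definition enough_projectives :: "('o, 'm, 'x) cat_scheme \<Rightarrow> bool" where
  "enough_projectives C \<longleftrightarrow>
     (\<forall>X \<in> obj C. \<exists>P e. is_projective C P \<and> is_epi C P X e)"

definition is_functor ::
  "('o1, 'm1, 'x) cat_scheme \<Rightarrow> ('o2, 'm2, 'y) cat_scheme \<Rightarrow> ('o1 \<Rightarrow> 'o2) \<Rightarrow> ('m1 \<Rightarrow> 'm2) \<Rightarrow> bool" where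
  "is_functor C D Fo Fm \<longleftrightarrow>
     (\<forall>X \<in> obj C. Fo X \<in> obj D)
   \<and> (\<forall>X \<in> obj C. \<forall>Y \<in> obj C. \<forall>f \<in> hom C X Y. Fm f \<in> hom D (Fo X) (Fo Y))
   \<and> (\<forall>X \<in> obj C. Fm (idm C X) = idm D (Fo X))
   \<and> (\<forall>X Y Z f g. X \<in> obj C \<and> Y \<in> obj C \<and> Z \<in> obj C \<and> f \<in> hom C X Y \<and> g \<in> hom C Y Z
        \<longrightarrow> Fm (cmp C g f) = cmp D (Fm g) (Fm f))"

definition exact_functor ::
  "('o1, 'm1, 'x) cat_scheme \<Rightarrow> ('o2, 'm2, 'y) cat_scheme \<Rightarrow> ('o1 \<Rightarrow> 'o2) \<Rightarrow> ('m1 \<Rightarrow> 'm2) \<Rightarrow> bool" where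
  "exact_functor C D Fo Fm \<longleftrightarrow> is_functor C D Fo Fm
   \<and> (\<forall>A B E f g. exact_at C A B E f g \<longrightarrow> exact_at D (Fo A) (Fo B) (Fo E) (Fm f) (Fm g))"

definition left_adjoint ::
  "('o1, 'm1, 'x) cat_scheme \<Rightarrow> ('o2, 'm2, 'y) cat_scheme \<Rightarrow> ('o1 \<Rightarrow> 'o2) \<Rightarrow> ('m1 \<Rightarrow> 'm2)
    \<Rightarrow> ('o2 \<Rightarrow> 'o1) \<Rightarrow> ('m2 \<Rightarrow> 'm1) \<Rightarrow> bool" where
  "left_adjoint C D Fo Fm Go Gm \<longleftrightarrow> is_functor C D Fo Fm \<and> is_functor D C Go Gm
   \<and> (\<exists>\<phi> :: 'o1 \<Rightarrow> 'o2 \<Rightarrow> 'm2 \<Rightarrow> 'm1.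
        (\<forall>X \<in> obj C. \<forall>Y \<in> obj D. bij_betw (\<phi> X Y) (hom D (Fo X) Y) (hom C X (Go Y)))
      \<and> (\<forall>X X' Y Y' h k g. X \<in> obj C \<and> X' \<in> obj C \<and> Y \<in> obj D \<and> Y' \<in> obj D
          \<and> h \<in> hom C X' X \<and> k \<in> hom D Y Y' \<and> g \<in> hom D (Fo X) Y
          \<longrightarrow> \<phi> X' Y' (cmp D k (cmp D g (Fm h))) = cmp C (Gm k) (cmp C (\<phi> X Y g) h)))"

text \<open>X is Gorenstein projective: there is an acyclic complex (P n, d n : P n \<rightarrow> P (n+1))
 of projectives such that Hom(P,Q) is acyclic for every projective Q, and X \<cong> Z^0(P),
 i.e. X is (the source of) a kernel of d 0.\<close>
definition gorenstein_projective :: "('o, 'm, 'x) cat_scheme \<Rightarrow> 'o \<Rightarrow> bool" where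
  "gorenstein_projective C X \<longleftrightarrow>
   (\<exists>(P :: int \<Rightarrow> 'o) (d :: int \<Rightarrow> 'm) k.
      (\<forall>n. is_projective C (P n))
    \<and> (\<forall>n. d n \<in> hom C (P n) (P (n + 1)))
    \<and> (\<forall>n. exact_at C (P (n - 1)) (P n) (P (n + 1)) (d (n - 1)) (d n))
    \<and> (\<forall>Q. is_projective C Q \<longrightarrow>
         (\<forall>n. \<forall>f \<in> hom C (P n) Q. cmp C f (d (n - 1)) = zr C (P (n - 1)) Q
              \<longrightarrow> (\<exists>g \<in> hom C (P (n + 1)) Q. f = cmp C g (d n))))
    \<and> is_kernel C (d 0) (P 0) (P 1) k X)"

text \<open>Gpd(X) \<le> n: exact sequence 0 \<rightarrow> M^{-n} \<rightarrow> ... \<rightarrow> M^0 \<rightarrow> X \<rightarrow> 0 with all M^{-i}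
 Gorenstein projective.  Encoding: S 0 = X, S (i+1) = M^{-i} (i \<le> n), maps
 c j : S (j+1) \<rightarrow> S j for j \<le> n; c 0 epi, c n mono, exact in between.\<close>
definition gpd_le :: "('o, 'm, 'x) cat_scheme \<Rightarrow> 'o \<Rightarrow> nat \<Rightarrow> bool" where
  "gpd_le C X n \<longleftrightarrow>
   (\<exists>(S :: nat \<Rightarrow> 'o) (c :: nat \<Rightarrow> 'm).
      S 0 = X
    \<and> (\<forall>i \<le> n. gorenstein_projective C (S (Suc i)))
    \<and> (\<forall>j \<le> n. c j \<in> hom C (S (Suc j)) (S j))
    \<and> is_epi C (S 1) (S 0) (c 0)
    \<and> is_mono C (S (Suc n)) (S n) (c n)
    \<and> (\<forall>j < n. exact_at C (S (j + 2)) (S (j + 1)) (S j) (c (j + 1)) (c j)))"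

definition Gpd :: "('o, 'm, 'x) cat_scheme \<Rightarrow> 'o \<Rightarrow> enat" where
  "Gpd C X = Inf {enat n | n. gpd_le C X n}"

end

theory Submission
  imports Defs
begin

text \<open>Transposition along the adjunction identifies \<open>Hom(F P, Q)\<close> with
  \<open>Hom(P, G Q)\<close>. Since \<open>G\<close> is exact it preserves epimorphisms, so \<open>F\<close> preserves
  projectives; since \<open>G Q\<close> is projective whenever \<open>Q\<close> is, a complex of projectives that
  stays exact under \<open>Hom(-, G Q)\<close> is carried by \<open>F\<close> to one that stays exact under
  \<open>Hom(-, Q)\<close>. Exactness of \<open>F\<close> takes care of acyclicity, kernels, epimorphisms and
  monomorphisms, so \<open>F\<close> maps a totally acyclic complex with \<open>Z\<^sup>0 = X\<close> to one with
  \<open>Z\<^sup>0 = F X\<close>, and a Gorenstein projective resolution of \<open>X\<close> of length \<open>n\<close> to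
  one of \<open>F X\<close>.\<close>

section \<open>Preadditive categories\<close>

lemma cat_comp_closed:
  "is_category C \<Longrightarrow> X \<in> obj C \<Longrightarrow> Y \<in> obj C \<Longrightarrow> Z \<in> obj C
    \<Longrightarrow> f \<in> hom C X Y \<Longrightarrow> g \<in> hom C Y Z \<Longrightarrow> cmp C g f \<in> hom C X Z"
  unfolding is_category_def by metis

lemma cat_id_closed: "is_category C \<Longrightarrow> X \<in> obj C \<Longrightarrow> idm C X \<in> hom C X X"
  unfolding is_category_def by metis

lemma cat_comp_id_right:
  "is_category C \<Longrightarrow> X \<in> obj C \<Longrightarrow> Y \<in> obj C \<Longrightarrow> f \<in> hom C X Y \<Longrightarrow> cmp C f (idm C X) = f"
  unfolding is_category_def by metis

lemma cat_comp_id_left: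
  "is_category C \<Longrightarrow> X \<in> obj C \<Longrightarrow> Y \<in> obj C \<Longrightarrow> f \<in> hom C X Y \<Longrightarrow> cmp C (idm C Y) f = f"
  unfolding is_category_def by metis

lemma cat_comp_assoc:
  "is_category C \<Longrightarrow> W \<in> obj C \<Longrightarrow> X \<in> obj C \<Longrightarrow> Y \<in> obj C \<Longrightarrow> Z \<in> obj C
    \<Longrightarrow> f \<in> hom C W X \<Longrightarrow> g \<in> hom C X Y \<Longrightarrow> h \<in> hom C Y Z
    \<Longrightarrow> cmp C h (cmp C g f) = cmp C (cmp C h g) f"
  unfolding is_category_def by metis

lemma preadditive_category: "is_preadditive C \<Longrightarrow> is_category C"
  unfolding is_preadditive_def by metis

lemma abelian_preadditive: "is_abelian C \<Longrightarrow> is_preadditive C"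
  unfolding is_abelian_def by metis

lemma hom_grp_simps [simp]:
  "carrier (hom_grp C X Y) = hom C X Y" "mult (hom_grp C X Y) = ad C" "one (hom_grp C X Y) = zr C X Y"
  by (simp_all add: hom_grp_def)

lemma preadditive_hom_group:
  "is_preadditive C \<Longrightarrow> X \<in> obj C \<Longrightarrow> Y \<in> obj C \<Longrightarrow> group (hom_grp C X Y)"
  unfolding is_preadditive_def by (metis comm_group.axioms(2))

lemma precomp_group_hom:
  assumes C: "is_preadditive C" and o: "X \<in> obj C" "Y \<in> obj C" "W \<in> obj C" and e: "e \<in> hom C X Y"
  shows "group_hom (hom_grp C Y W) (hom_grp C X W) (\<lambda>g. cmp C g e)"
proof -
  have "cmp C (ad C g g') e = ad C (cmp C g e) (cmp C g' e)" if "g \<in> hom C Y W" "g' \<in> hom C Y W" for g g'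
    using C o e that unfolding is_preadditive_def by metis
  then have "(\<lambda>g. cmp C g e) \<in> Group.hom (hom_grp C Y W) (hom_grp C X W)"
    using cat_comp_closed[OF preadditive_category[OF C] o(1,2,3) e] by (auto intro: homI)
  then show ?thesis
    using preadditive_hom_group[OF C] o by (simp add: group_hom_def group_hom_axioms_def)
qed

lemma postcomp_group_hom:
  assumes C: "is_preadditive C" and o: "W \<in> obj C" "X \<in> obj C" "Y \<in> obj C" and m: "m \<in> hom C X Y"
  shows "group_hom (hom_grp C W X) (hom_grp C W Y) (\<lambda>g. cmp C m g)"
proof -
  have "cmp C m (ad C g g') = ad C (cmp C m g) (cmp C m g')" if "g \<in> hom C W X" "g' \<in> hom C W X" for g g'
    using C o m that unfolding is_preadditive_def by metis
  then have "(\<lambda>g. cmp C m g) \<in> Group.hom (hom_grp C W X) (hom_grp C W Y)"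
    using cat_comp_closed[OF preadditive_category[OF C] o _ m] by (auto intro: homI)
  then show ?thesis
    using preadditive_hom_group[OF C] o by (simp add: group_hom_def group_hom_axioms_def)
qed

lemma zr_closed: "is_preadditive C \<Longrightarrow> X \<in> obj C \<Longrightarrow> Y \<in> obj C \<Longrightarrow> zr C X Y \<in> hom C X Y"
  using monoid.one_closed[OF group.is_monoid[OF preadditive_hom_group]] by simp

lemma comp_zr_left:
  "is_preadditive C \<Longrightarrow> X \<in> obj C \<Longrightarrow> Y \<in> obj C \<Longrightarrow> Z \<in> obj C \<Longrightarrow> f \<in> hom C X Y
    \<Longrightarrow> cmp C (zr C Y Z) f = zr C X Z"
  using group_hom.hom_one[OF precomp_group_hom] by simp

lemma comp_zr_right:
  "is_preadditive C \<Longrightarrow> X \<in> obj C \<Longrightarrow> Y \<in> obj C \<Longrightarrow> Z \<in> obj C \<Longrightarrow> g \<in> hom C Y Z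
    \<Longrightarrow> cmp C g (zr C X Y) = zr C X Z"
  using group_hom.hom_one[OF postcomp_group_hom] by simp

definition hom_diff :: "('o, 'm, 'x) cat_scheme \<Rightarrow> 'o \<Rightarrow> 'o \<Rightarrow> 'm \<Rightarrow> 'm \<Rightarrow> 'm" where
  "hom_diff C X Y g h = ad C g (inv\<^bsub>hom_grp C X Y\<^esub> h)"

lemma hom_diff_closed:
  assumes "is_preadditive C" "X \<in> obj C" "Y \<in> obj C" "g \<in> hom C X Y" "h \<in> hom C X Y"
  shows "hom_diff C X Y g h \<in> hom C X Y"
proof -
  interpret group "hom_grp C X Y" using preadditive_hom_group assms(1-3) .
  show ?thesis using assms(4,5) m_closed[of g] inv_closed[of h] by (simp add: hom_diff_def)
qed

lemma hom_diff_self: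
  assumes "is_preadditive C" "X \<in> obj C" "Y \<in> obj C" "h \<in> hom C X Y"
  shows "hom_diff C X Y h h = zr C X Y"
proof -
  interpret group "hom_grp C X Y" using preadditive_hom_group assms(1-3) .
  show ?thesis using assms(4) r_inv[of h] by (simp add: hom_diff_def)
qed

lemma hom_diff_eq_zr_imp_eq:
  assumes C: "is_preadditive C" and o: "X \<in> obj C" "Y \<in> obj C" and gh: "g \<in> hom C X Y" "h \<in> hom C X Y"
    and "hom_diff C X Y g h = zr C X Y"
  shows "g = h"
proof -
  interpret group "hom_grp C X Y" using preadditive_hom_group[OF C o] .
  have "inv\<^bsub>hom_grp C X Y\<^esub> (inv\<^bsub>hom_grp C X Y\<^esub> h) = g"
    using assms(6) gh inv_closed[of h] by (intro inv_equality) (simp_all add: hom_diff_def)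
  then show ?thesis using gh by simp
qed

lemma comp_hom_diff_left:
  assumes "is_preadditive C" "X \<in> obj C" "Y \<in> obj C" "W \<in> obj C" "e \<in> hom C X Y"
    "g \<in> hom C Y W" "h \<in> hom C Y W"
  shows "cmp C (hom_diff C Y W g h) e = hom_diff C X W (cmp C g e) (cmp C h e)"
proof -
  interpret group_hom "hom_grp C Y W" "hom_grp C X W" "\<lambda>g. cmp C g e"
    using precomp_group_hom assms(1-5) .
  show ?thesis using assms(6,7) hom_mult[of g] hom_inv[of h] G.inv_closed[of h] by (simp add: hom_diff_def)
qed

lemma comp_hom_diff_right:
  assumes "is_preadditive C" "W \<in> obj C" "X \<in> obj C" "Y \<in> obj C" "m \<in> hom C X Y"
    "g \<in> hom C W X" "h \<in> hom C W X"
  shows "cmp C m (hom_diff C W X g h) = hom_diff C W Y (cmp C m g) (cmp C m h)"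
proof -
  interpret group_hom "hom_grp C W X" "hom_grp C W Y" "\<lambda>g. cmp C m g"
    using postcomp_group_hom assms(1-5) .
  show ?thesis using assms(6,7) hom_mult[of g] hom_inv[of h] G.inv_closed[of h] by (simp add: hom_diff_def)
qed

section \<open>Exact sequences in abelian categories\<close>

lemma is_epiD:
  "is_epi C X Y e \<Longrightarrow> X \<in> obj C \<and> Y \<in> obj C \<and> e \<in> hom C X Y"
  "is_epi C X Y e \<Longrightarrow> W \<in> obj C \<Longrightarrow> g \<in> hom C Y W \<Longrightarrow> h \<in> hom C Y W
    \<Longrightarrow> cmp C g e = cmp C h e \<Longrightarrow> g = h"
  unfolding is_epi_def by blast+

lemma is_monoD:
  "is_mono C X Y m \<Longrightarrow> X \<in> obj C \<and> Y \<in> obj C \<and> m \<in> hom C X Y"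
  "is_mono C X Y m \<Longrightarrow> W \<in> obj C \<Longrightarrow> g \<in> hom C W X \<Longrightarrow> h \<in> hom C W X
    \<Longrightarrow> cmp C m g = cmp C m h \<Longrightarrow> g = h"
  unfolding is_mono_def by blast+

lemma is_kernelD:
  "is_kernel C f X Y k K \<Longrightarrow> X \<in> obj C \<and> Y \<in> obj C \<and> K \<in> obj C
    \<and> f \<in> hom C X Y \<and> k \<in> hom C K X \<and> cmp C f k = zr C K Y"
  "is_kernel C f X Y k K \<Longrightarrow> W \<in> obj C \<Longrightarrow> h \<in> hom C W X \<Longrightarrow> cmp C f h = zr C W Y
    \<Longrightarrow> \<exists>!u. u \<in> hom C W K \<and> cmp C k u = h"
  unfolding is_kernel_def by blast+

lemma is_cokernelD:
  "is_cokernel C f X Y c Q \<Longrightarrow> X \<in> obj C \<and> Y \<in> obj C \<and> Q \<in> obj C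
    \<and> f \<in> hom C X Y \<and> c \<in> hom C Y Q \<and> cmp C c f = zr C X Q"
  "is_cokernel C f X Y c Q \<Longrightarrow> W \<in> obj C \<Longrightarrow> h \<in> hom C Y W \<Longrightarrow> cmp C h f = zr C X W
    \<Longrightarrow> \<exists>!u. u \<in> hom C Q W \<and> cmp C u c = h"
  unfolding is_cokernel_def by blast+

lemma exact_atD:
  "exact_at C A B D f g \<Longrightarrow> A \<in> obj C \<and> B \<in> obj C \<and> D \<in> obj C
    \<and> f \<in> hom C A B \<and> g \<in> hom C B D \<and> cmp C g f = zr C A D"
  "exact_at C A B D f g \<Longrightarrow> W \<in> obj C \<Longrightarrow> h \<in> hom C W B \<Longrightarrow> cmp C g h = zr C W D
    \<Longrightarrow> is_cokernel C f A B c Q \<Longrightarrow> cmp C c h = zr C W Q"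
  unfolding exact_at_def by blast+

lemma abelian_has_zero_object:
  "is_abelian C \<Longrightarrow> \<exists>Z \<in> obj C. \<forall>X \<in> obj C. hom C Z X = {zr C Z X} \<and> hom C X Z = {zr C X Z}"
  unfolding is_abelian_def by blast

lemma abelian_has_cokernel:
  "is_abelian C \<Longrightarrow> X \<in> obj C \<Longrightarrow> Y \<in> obj C \<Longrightarrow> f \<in> hom C X Y \<Longrightarrow> \<exists>c Q. is_cokernel C f X Y c Q"
  unfolding is_abelian_def by blast

lemma abelian_mono_is_kernel:
  "is_abelian C \<Longrightarrow> is_mono C X Y m \<Longrightarrow> \<exists>Z \<in> obj C. \<exists>g \<in> hom C Y Z. is_kernel C g Y Z m X"
  unfolding is_abelian_def by blast

lemma epiI_cokernel_zr:
  assumes C: "is_preadditive C" and ck: "is_cokernel C e X Y (zr C Y Q) Q"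
  shows "is_epi C X Y e"
  unfolding is_epi_def
proof (intro conjI ballI impI)
  have o: "X \<in> obj C" "Y \<in> obj C" "Q \<in> obj C" "e \<in> hom C X Y" using is_cokernelD(1)[OF ck] by auto
  then show "X \<in> obj C" "Y \<in> obj C" "e \<in> hom C X Y" by auto
  fix W g h assume W: "W \<in> obj C" and gh: "g \<in> hom C Y W" "h \<in> hom C Y W" "cmp C g e = cmp C h e"
  let ?d = "hom_diff C Y W g h"
  have d: "?d \<in> hom C Y W" using hom_diff_closed[OF C o(2) W gh(1,2)] .
  have "cmp C ?d e = zr C X W"
    using comp_hom_diff_left[OF C o(1,2) W o(4) gh(1,2)] gh(3)
      hom_diff_self[OF C o(1) W cat_comp_closed[OF preadditive_category[OF C] o(1,2) W o(4) gh(2)]]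
    by simp
  then obtain u where "u \<in> hom C Q W" "?d = cmp C u (zr C Y Q)"
    using is_cokernelD(2)[OF ck W d] by metis
  then have "?d = zr C Y W" using comp_zr_right[OF C o(2,3) W] by simp
  then show "g = h" using hom_diff_eq_zr_imp_eq[OF C o(2) W gh(1,2)] by simp
qed

lemma monoI_zero_kernel:
  assumes C: "is_preadditive C" and o: "X \<in> obj C" "Y \<in> obj C" "m \<in> hom C X Y"
    and trivial_kernel: "\<And>W h. W \<in> obj C \<Longrightarrow> h \<in> hom C W X \<Longrightarrow> cmp C m h = zr C W Y \<Longrightarrow> h = zr C W X"
  shows "is_mono C X Y m"
  unfolding is_mono_def
proof (intro conjI ballI impI o)
  fix W g h assume W: "W \<in> obj C" and gh: "g \<in> hom C W X" "h \<in> hom C W X" "cmp C m g = cmp C m h"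
  let ?d = "hom_diff C W X g h"
  have "cmp C m ?d = zr C W Y"
    using comp_hom_diff_right[OF C W o gh(1,2)] gh(3)
      hom_diff_self[OF C W o(2) cat_comp_closed[OF preadditive_category[OF C] W o(1,2) gh(2) o(3)]]
    by simp
  then have "?d = zr C W X" by (rule trivial_kernel[OF W hom_diff_closed[OF C W o(1) gh(1,2)]])
  then show "g = h" using hom_diff_eq_zr_imp_eq[OF C W o(1) gh(1,2)] by simp
qed

lemma epi_exact_zr:
  assumes C: "is_preadditive C" and e: "is_epi C X Y e" and Z: "Z \<in> obj C"
  shows "exact_at C X Y Z e (zr C Y Z)"
proof -
  have o: "X \<in> obj C" "Y \<in> obj C" "e \<in> hom C X Y" using is_epiD(1)[OF e] by auto
  show ?thesis unfolding exact_at_def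
  proof (intro conjI allI ballI impI o Z zr_closed[OF C])
    show "cmp C (zr C Y Z) e = zr C X Z" using comp_zr_left[OF C o(1,2) Z o(3)] .
    fix W h c Q assume W: "W \<in> obj C" and h: "h \<in> hom C W Y"
      and "cmp C (zr C Y Z) h = zr C W Z \<and> is_cokernel C e X Y c Q"
    then have Q: "Q \<in> obj C" "c \<in> hom C Y Q" "cmp C c e = zr C X Q" by (auto dest: is_cokernelD(1))
    have "c = zr C Y Q"
      using is_epiD(2)[OF e Q(1,2) zr_closed[OF C o(2) Q(1)]] Q(3) comp_zr_left[OF C o(1,2) Q(1) o(3)] by simp
    then show "cmp C c h = zr C W Q" using comp_zr_left[OF C W o(2) Q(1) h] by simp
  qed
qed

lemma exact_zr_imp_epi:
  assumes C: "is_abelian C" and ex: "exact_at C X Y Z e (zr C Y Z)"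
  shows "is_epi C X Y e"
proof -
  have pa: "is_preadditive C" using abelian_preadditive[OF C] .
  have o: "X \<in> obj C" "Y \<in> obj C" "Z \<in> obj C" "e \<in> hom C X Y" using exact_atD(1)[OF ex] by auto
  obtain c Q where ck: "is_cokernel C e X Y c Q" using abelian_has_cokernel[OF C o(1,2,4)] by blast
  have Q: "Q \<in> obj C" "c \<in> hom C Y Q" using is_cokernelD(1)[OF ck] by auto
  have idY: "idm C Y \<in> hom C Y Y" using cat_id_closed[OF preadditive_category[OF pa] o(2)] .
  have "cmp C c (idm C Y) = zr C Y Q"
    using exact_atD(2)[OF ex o(2) idY comp_zr_left[OF pa o(2,2,3) idY] ck] .
  then have "c = zr C Y Q" using cat_comp_id_right[OF preadditive_category[OF pa] o(2) Q] by simp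
  then show ?thesis using epiI_cokernel_zr[OF pa] ck by simp
qed

lemma mono_exact_zr:
  assumes C: "is_preadditive C" and m: "is_mono C X Y m" and Z: "Z \<in> obj C"
  shows "exact_at C Z X Y (zr C Z X) m"
proof -
  have o: "X \<in> obj C" "Y \<in> obj C" "m \<in> hom C X Y" using is_monoD(1)[OF m] by auto
  show ?thesis unfolding exact_at_def
  proof (intro conjI allI ballI impI o Z zr_closed[OF C])
    show "cmp C m (zr C Z X) = zr C Z Y" using comp_zr_right[OF C Z o] .
    fix W h c Q assume W: "W \<in> obj C" and h: "h \<in> hom C W X"
      and hc: "cmp C m h = zr C W Y \<and> is_cokernel C (zr C Z X) Z X c Q"
    then have Q: "Q \<in> obj C" "c \<in> hom C X Q" by (auto dest: is_cokernelD(1))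
    have "h = zr C W X"
      using is_monoD(2)[OF m W h zr_closed[OF C W o(1)]] hc comp_zr_right[OF C W o] by simp
    then show "cmp C c h = zr C W Q" using comp_zr_right[OF C W o(1) Q] by simp
  qed
qed

lemma exact_zr_imp_mono:
  assumes C: "is_preadditive C" and ex: "exact_at C Z X Y (zr C Z X) m"
  shows "is_mono C X Y m"
proof -
  have cat: "is_category C" using preadditive_category[OF C] .
  have o: "Z \<in> obj C" "X \<in> obj C" "Y \<in> obj C" "m \<in> hom C X Y" using exact_atD(1)[OF ex] by auto
  have ck: "is_cokernel C (zr C Z X) Z X (idm C X) X"
    unfolding is_cokernel_def
    using o zr_closed[OF C] cat_id_closed[OF cat] cat_comp_id_left[OF cat] cat_comp_id_right[OF cat]
    by auto
  show ?thesis
  proof (rule monoI_zero_kernel[OF C o(2-4)])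
    fix W h assume "W \<in> obj C" "h \<in> hom C W X" "cmp C m h = zr C W Y"
    then show "h = zr C W X" using exact_atD(2)[OF ex _ _ _ ck] cat_comp_id_left[OF cat _ o(2)] by metis
  qed
qed

section \<open>Exact functors\<close>

lemma is_functorD:
  "is_functor C D Fo Fm \<Longrightarrow> X \<in> obj C \<Longrightarrow> Fo X \<in> obj D"
  "is_functor C D Fo Fm \<Longrightarrow> X \<in> obj C \<Longrightarrow> Y \<in> obj C \<Longrightarrow> f \<in> hom C X Y
    \<Longrightarrow> Fm f \<in> hom D (Fo X) (Fo Y)"
  "is_functor C D Fo Fm \<Longrightarrow> X \<in> obj C \<Longrightarrow> Fm (idm C X) = idm D (Fo X)"
  "is_functor C D Fo Fm \<Longrightarrow> X \<in> obj C \<Longrightarrow> Y \<in> obj C \<Longrightarrow> Z \<in> obj C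
    \<Longrightarrow> f \<in> hom C X Y \<Longrightarrow> g \<in> hom C Y Z \<Longrightarrow> Fm (cmp C g f) = cmp D (Fm g) (Fm f)"
  unfolding is_functor_def by blast+

lemma exact_functorD:
  "exact_functor C D Fo Fm \<Longrightarrow> is_functor C D Fo Fm"
  "exact_functor C D Fo Fm \<Longrightarrow> exact_at C A B E f g \<Longrightarrow> exact_at D (Fo A) (Fo B) (Fo E) (Fm f) (Fm g)"
  unfolding exact_functor_def by blast+

lemma exact_functor_zr:
  assumes C: "is_abelian C" and F: "exact_functor C D Fo Fm" and o: "X \<in> obj C" "Y \<in> obj C"
  shows "Fm (zr C X Y) = zr D (Fo X) (Fo Y)"
proof -
  have pa: "is_preadditive C" using abelian_preadditive[OF C] .
  obtain Z where Z: "Z \<in> obj C" "\<And>X. X \<in> obj C \<Longrightarrow> hom C Z X = {zr C Z X} \<and> hom C X Z = {zr C X Z}"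
    using abelian_has_zero_object[OF C] by blast
  have zXZ: "zr C X Z \<in> hom C X Z" and zZY: "zr C Z Y \<in> hom C Z Y" using zr_closed[OF pa] o Z(1) by auto
  have fac: "cmp C (zr C Z Y) (zr C X Z) = zr C X Y" using comp_zr_left[OF pa o(1) Z(1) o(2) zXZ] .
  have "is_epi C X Z (zr C X Z)" unfolding is_epi_def using Z o(1) zXZ by auto
  then have "exact_at C X Z Y (zr C X Z) (zr C Z Y)" using epi_exact_zr[OF pa _ o(2)] by blast
  then have "cmp D (Fm (zr C Z Y)) (Fm (zr C X Z)) = zr D (Fo X) (Fo Y)"
    using exact_atD(1)[OF exact_functorD(2)[OF F]] by blast
  then show ?thesis
    using fac is_functorD(4)[OF exact_functorD(1)[OF F] o(1) Z(1) o(2) zXZ zZY] by simp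
qed

lemma exact_functor_epi:
  assumes C: "is_abelian C" and D: "is_abelian D" and F: "exact_functor C D Fo Fm" and e: "is_epi C X Y e"
  shows "is_epi D (Fo X) (Fo Y) (Fm e)"
proof -
  have Y: "Y \<in> obj C" using is_epiD(1)[OF e] by blast
  have "exact_at D (Fo X) (Fo Y) (Fo Y) (Fm e) (Fm (zr C Y Y))"
    using exact_functorD(2)[OF F epi_exact_zr[OF abelian_preadditive[OF C] e Y]] .
  then have "exact_at D (Fo X) (Fo Y) (Fo Y) (Fm e) (zr D (Fo Y) (Fo Y))"
    by (simp only: exact_functor_zr[OF C F Y Y])
  then show ?thesis by (rule exact_zr_imp_epi[OF D])
qed

lemma exact_functor_mono:
  assumes C: "is_abelian C" and D: "is_abelian D" and F: "exact_functor C D Fo Fm" and m: "is_mono C X Y m"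
  shows "is_mono D (Fo X) (Fo Y) (Fm m)"
proof -
  have X: "X \<in> obj C" using is_monoD(1)[OF m] by blast
  have "exact_at D (Fo X) (Fo X) (Fo Y) (Fm (zr C X X)) (Fm m)"
    using exact_functorD(2)[OF F mono_exact_zr[OF abelian_preadditive[OF C] m X]] .
  then have "exact_at D (Fo X) (Fo X) (Fo Y) (zr D (Fo X) (Fo X)) (Fm m)"
    by (simp only: exact_functor_zr[OF C F X X])
  then show ?thesis by (rule exact_zr_imp_mono[OF abelian_preadditive[OF D]])
qed

lemma kernel_is_mono:
  assumes C: "is_preadditive C" and k: "is_kernel C f X Y k K"
  shows "is_mono C K X k"
proof -
  have cat: "is_category C" using preadditive_category[OF C] .
  have o: "X \<in> obj C" "Y \<in> obj C" "K \<in> obj C" "f \<in> hom C X Y" "k \<in> hom C K X" "cmp C f k = zr C K Y"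
    using is_kernelD(1)[OF k] by auto
  show ?thesis unfolding is_mono_def
  proof (intro conjI ballI impI o)
    fix W g h assume W: "W \<in> obj C" and gh: "g \<in> hom C W K" "h \<in> hom C W K" "cmp C k g = cmp C k h"
    have kg: "cmp C k g \<in> hom C W X" using cat_comp_closed[OF cat W o(3,1) gh(1) o(5)] .
    have "cmp C f (cmp C k g) = zr C W Y"
      using cat_comp_assoc[OF cat W o(3,1,2) gh(1) o(5,4)] o(6) comp_zr_left[OF C W o(3,2) gh(1)] by simp
    moreover have "cmp C k h = cmp C k g" using gh(3) ..
    ultimately show "g = h" using is_kernelD(2)[OF k W kg] gh(1,2) by (metis (no_types, lifting))
  qed
qed

lemma kernel_exact:
  assumes C: "is_preadditive C" and k: "is_kernel C f X Y k K"
  shows "exact_at C K X Y k f"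
proof -
  have cat: "is_category C" using preadditive_category[OF C] .
  have o: "X \<in> obj C" "Y \<in> obj C" "K \<in> obj C" "f \<in> hom C X Y" "k \<in> hom C K X" "cmp C f k = zr C K Y"
    using is_kernelD(1)[OF k] by auto
  show ?thesis unfolding exact_at_def
  proof (intro conjI allI ballI impI o)
    fix W h c Q assume W: "W \<in> obj C" and h: "h \<in> hom C W X"
      and hc: "cmp C f h = zr C W Y \<and> is_cokernel C k K X c Q"
    obtain u where u: "u \<in> hom C W K" "cmp C k u = h" using is_kernelD(2)[OF k W h] hc by blast
    have Q: "Q \<in> obj C" "c \<in> hom C X Q" "cmp C c k = zr C K Q" using hc by (auto dest: is_cokernelD(1))
    show "cmp C c h = zr C W Q"
      using u(2) cat_comp_assoc[OF cat W o(3,1) Q(1) u(1) o(5) Q(2)] Q(3) comp_zr_left[OF C W o(3) Q(1) u(1)]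
      by simp
  qed
qed

lemma mono_exact_imp_kernel:
  assumes C: "is_abelian C" and m: "is_mono C K X k" and ex: "exact_at C K X Y k f"
  shows "is_kernel C f X Y k K"
proof -
  have pa: "is_preadditive C" using abelian_preadditive[OF C] .
  have cat: "is_category C" using preadditive_category[OF pa] .
  have o: "K \<in> obj C" "X \<in> obj C" "Y \<in> obj C" "k \<in> hom C K X" "f \<in> hom C X Y" "cmp C f k = zr C K Y"
    using exact_atD(1)[OF ex] by auto
  obtain Z g where g: "Z \<in> obj C" "g \<in> hom C X Z" "is_kernel C g X Z k K"
    using abelian_mono_is_kernel[OF C m] by blast
  obtain c Q where ck: "is_cokernel C k K X c Q" using abelian_has_cokernel[OF C o(1,2,4)] by blast
  have Q: "Q \<in> obj C" "c \<in> hom C X Q" using is_cokernelD(1)[OF ck] by auto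
  have gk: "cmp C g k = zr C K Z" using is_kernelD(1)[OF g(3)] by auto
  obtain v where v: "v \<in> hom C Q Z" "cmp C v c = g"
    using ex1_implies_ex[OF is_cokernelD(2)[OF ck g(1,2) gk]] by blast
  show ?thesis unfolding is_kernel_def
  proof (intro conjI ballI impI o)
    fix W h assume W: "W \<in> obj C" and h: "h \<in> hom C W X" and fh: "cmp C f h = zr C W Y"
    have "cmp C g h = cmp C v (cmp C c h)"
      using v(2) cat_comp_assoc[OF cat W o(2) Q(1) g(1) h Q(2) v(1)] by simp
    also have "\<dots> = zr C W Z"
      using exact_atD(2)[OF ex W h fh ck] comp_zr_right[OF pa W Q(1) g(1) v(1)] by simp
    finally have "cmp C g h = zr C W Z" .
    then obtain u where u: "u \<in> hom C W K" "cmp C k u = h"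
      using ex1_implies_ex[OF is_kernelD(2)[OF g(3) W h]] by blast
    show "\<exists>!u. u \<in> hom C W K \<and> cmp C k u = h"
    proof (rule ex1I[of _ u])
      fix u' assume "u' \<in> hom C W K \<and> cmp C k u' = h"
      then show "u' = u" using is_monoD(2)[OF m W _ u(1)] u(2) by auto
    qed (use u in blast)
  qed
qed

lemma exact_functor_kernel:
  assumes C: "is_abelian C" and D: "is_abelian D" and F: "exact_functor C D Fo Fm"
    and k: "is_kernel C f X Y k K"
  shows "is_kernel D (Fm f) (Fo X) (Fo Y) (Fm k) (Fo K)"
proof -
  have pa: "is_preadditive C" using abelian_preadditive[OF C] .
  show ?thesis
    using mono_exact_imp_kernel[OF D exact_functor_mono[OF C D F kernel_is_mono[OF pa k]]
        exact_functorD(2)[OF F kernel_exact[OF pa k]]] .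
qed

section \<open>Adjunctions and totally acyclic complexes\<close>

lemma is_projectiveD:
  "is_projective C P \<Longrightarrow> P \<in> obj C"
  "is_projective C P \<Longrightarrow> is_epi C X Y e \<Longrightarrow> f \<in> hom C P Y \<Longrightarrow> \<exists>g \<in> hom C P X. cmp C e g = f"
  unfolding is_projective_def by blast+

definition hom_complex_exact :: "('o, 'm, 'x) cat_scheme \<Rightarrow> (int \<Rightarrow> 'o) \<Rightarrow> (int \<Rightarrow> 'm) \<Rightarrow> 'o \<Rightarrow> bool" where
  "hom_complex_exact C P d Q \<longleftrightarrow>
     (\<forall>n. \<forall>f \<in> hom C (P n) Q. cmp C f (d (n - 1)) = zr C (P (n - 1)) Q
        \<longrightarrow> (\<exists>g \<in> hom C (P (n + 1)) Q. f = cmp C g (d n)))"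

definition totally_acyclic :: "('o, 'm, 'x) cat_scheme \<Rightarrow> (int \<Rightarrow> 'o) \<Rightarrow> (int \<Rightarrow> 'm) \<Rightarrow> bool" where
  "totally_acyclic C P d \<longleftrightarrow>
     (\<forall>n. is_projective C (P n))
   \<and> (\<forall>n. d n \<in> hom C (P n) (P (n + 1)))
   \<and> (\<forall>n. exact_at C (P (n - 1)) (P n) (P (n + 1)) (d (n - 1)) (d n))
   \<and> (\<forall>Q. is_projective C Q \<longrightarrow> hom_complex_exact C P d Q)"

lemma gorenstein_projective_iff_totally_acyclic:
  "gorenstein_projective C X \<longleftrightarrow> (\<exists>P d k. totally_acyclic C P d \<and> is_kernel C (d 0) (P 0) (P 1) k X)"
  unfolding gorenstein_projective_def totally_acyclic_def hom_complex_exact_def by (simp only: conj_assoc)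

locale adjunction =
  fixes C :: "('o1, 'm1, 'x) cat_scheme" and D :: "('o2, 'm2, 'y) cat_scheme"
    and Fo :: "'o1 \<Rightarrow> 'o2" and Fm :: "'m1 \<Rightarrow> 'm2"
    and Go :: "'o2 \<Rightarrow> 'o1" and Gm :: "'m2 \<Rightarrow> 'm1"
    and \<phi> :: "'o1 \<Rightarrow> 'o2 \<Rightarrow> 'm2 \<Rightarrow> 'm1"
  assumes cat_C: "is_category C" and cat_D: "is_category D"
    and functor_F: "is_functor C D Fo Fm" and functor_G: "is_functor D C Go Gm"
    and transpose_bij: "\<And>X Y. X \<in> obj C \<Longrightarrow> Y \<in> obj D \<Longrightarrow> bij_betw (\<phi> X Y) (hom D (Fo X) Y) (hom C X (Go Y))"
    and transpose_natural: "\<And>X X' Y Y' h k g. X \<in> obj C \<Longrightarrow> X' \<in> obj C \<Longrightarrow> Y \<in> obj D \<Longrightarrow> Y' \<in> obj D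
      \<Longrightarrow> h \<in> hom C X' X \<Longrightarrow> k \<in> hom D Y Y' \<Longrightarrow> g \<in> hom D (Fo X) Y
      \<Longrightarrow> \<phi> X' Y' (cmp D k (cmp D g (Fm h))) = cmp C (Gm k) (cmp C (\<phi> X Y g) h)"

lemma left_adjoint_imp_adjunction:
  assumes "is_category C" "is_category D" "left_adjoint C D Fo Fm Go Gm"
  obtains \<phi> where "adjunction C D Fo Fm Go Gm \<phi>"
  using assms unfolding left_adjoint_def adjunction_def by metis

context adjunction
begin

lemma transpose_closed:
  "X \<in> obj C \<Longrightarrow> Y \<in> obj D \<Longrightarrow> f \<in> hom D (Fo X) Y \<Longrightarrow> \<phi> X Y f \<in> hom C X (Go Y)"
  using transpose_bij bij_betw_apply by metis

lemma transpose_surj: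
  assumes "X \<in> obj C" "Y \<in> obj D" "g \<in> hom C X (Go Y)"
  obtains f where "f \<in> hom D (Fo X) Y" "\<phi> X Y f = g"
  using transpose_bij[OF assms(1,2)] assms(3) by (metis bij_betw_iff_bijections)

lemma transpose_inj:
  "X \<in> obj C \<Longrightarrow> Y \<in> obj D \<Longrightarrow> f \<in> hom D (Fo X) Y \<Longrightarrow> f' \<in> hom D (Fo X) Y
    \<Longrightarrow> \<phi> X Y f = \<phi> X Y f' \<Longrightarrow> f = f'"
  using transpose_bij bij_betw_imp_inj_on inj_on_def by metis

lemma transpose_natural_left:
  assumes X: "X \<in> obj C" "X' \<in> obj C" and Y: "Y \<in> obj D" and h: "h \<in> hom C X' X"
    and g: "g \<in> hom D (Fo X) Y"
  shows "\<phi> X' Y (cmp D g (Fm h)) = cmp C (\<phi> X Y g) h"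
proof -
  have FX: "Fo X \<in> obj D" "Fo X' \<in> obj D" using is_functorD(1)[OF functor_F] X by auto
  have gh: "cmp D g (Fm h) \<in> hom D (Fo X') Y"
    using cat_comp_closed[OF cat_D FX(2,1) Y is_functorD(2)[OF functor_F X(2,1) h] g] .
  have GY: "Go Y \<in> obj C" using is_functorD(1)[OF functor_G Y] .
  have "\<phi> X' Y (cmp D (idm D Y) (cmp D g (Fm h))) = cmp C (Gm (idm D Y)) (cmp C (\<phi> X Y g) h)"
    using transpose_natural[OF X Y Y h cat_id_closed[OF cat_D Y] g] .
  then show ?thesis
    using cat_comp_id_left[OF cat_D FX(2) Y gh] is_functorD(3)[OF functor_G Y]
      cat_comp_id_left[OF cat_C X(2) GY cat_comp_closed[OF cat_C X(2,1) GY h transpose_closed[OF X(1) Y g]]]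
    by simp
qed

lemma transpose_natural_right:
  assumes X: "X \<in> obj C" and Y: "Y \<in> obj D" "Y' \<in> obj D" and k: "k \<in> hom D Y Y'"
    and g: "g \<in> hom D (Fo X) Y"
  shows "\<phi> X Y' (cmp D k g) = cmp C (Gm k) (\<phi> X Y g)"
proof -
  have FX: "Fo X \<in> obj D" using is_functorD(1)[OF functor_F] X by auto
  have GY: "Go Y \<in> obj C" using is_functorD(1)[OF functor_G Y(1)] .
  have "\<phi> X Y' (cmp D k (cmp D g (Fm (idm C X)))) = cmp C (Gm k) (cmp C (\<phi> X Y g) (idm C X))"
    using transpose_natural[OF X X Y cat_id_closed[OF cat_C X] k g] .
  then show ?thesis
    using is_functorD(3)[OF functor_F X] cat_comp_id_right[OF cat_D FX Y(1) g]
      cat_comp_id_right[OF cat_C X GY transpose_closed[OF X Y(1) g]]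
    by simp
qed

lemma transpose_zr:
  assumes C: "is_preadditive C" and D: "is_preadditive D" and X: "X \<in> obj C" and Y: "Y \<in> obj D"
  shows "\<phi> X Y (zr D (Fo X) Y) = zr C X (Go Y)"
proof -
  have FX: "Fo X \<in> obj D" using is_functorD(1)[OF functor_F X] .
  have z: "zr D (Fo X) Y \<in> hom D (Fo X) Y" using zr_closed[OF D FX Y] .
  have "\<phi> X Y (zr D (Fo X) Y) = \<phi> X Y (cmp D (zr D (Fo X) Y) (Fm (zr C X X)))"
    using comp_zr_left[OF D FX FX Y is_functorD(2)[OF functor_F X X zr_closed[OF C X X]]] by simp
  also have "\<dots> = cmp C (\<phi> X Y (zr D (Fo X) Y)) (zr C X X)"
    using transpose_natural_left[OF X X Y zr_closed[OF C X X] z] .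
  also have "\<dots> = zr C X (Go Y)"
    using comp_zr_right[OF C X X is_functorD(1)[OF functor_G Y] transpose_closed[OF X Y z]] .
  finally show ?thesis .
qed

lemma left_adjoint_preserves_projective:
  assumes G_epi: "\<And>X Y e. is_epi D X Y e \<Longrightarrow> is_epi C (Go X) (Go Y) (Gm e)"
    and P: "is_projective C P"
  shows "is_projective D (Fo P)"
  unfolding is_projective_def
proof (intro conjI allI impI)
  have Po: "P \<in> obj C" using is_projectiveD(1)[OF P] .
  then show FP: "Fo P \<in> obj D" using is_functorD(1)[OF functor_F] by blast
  fix X Y e f assume "is_epi D X Y e \<and> f \<in> hom D (Fo P) Y"
  then have e: "is_epi D X Y e" and f: "f \<in> hom D (Fo P) Y" by auto
  have o: "X \<in> obj D" "Y \<in> obj D" "e \<in> hom D X Y" using is_epiD(1)[OF e] by auto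
  obtain g where g: "g \<in> hom C P (Go X)" "cmp C (Gm e) g = \<phi> P Y f"
    using is_projectiveD(2)[OF P G_epi[OF e] transpose_closed[OF Po o(2) f]] by blast
  obtain f' where f': "f' \<in> hom D (Fo P) X" "\<phi> P X f' = g"
    using transpose_surj[OF Po o(1) g(1)] .
  have "\<phi> P Y (cmp D e f') = \<phi> P Y f"
    using transpose_natural_right[OF Po o(1,2,3) f'(1)] f'(2) g(2) by simp
  then have "cmp D e f' = f"
    using transpose_inj[OF Po o(2) cat_comp_closed[OF cat_D FP o(1,2) f'(1) o(3)] f] by simp
  then show "\<exists>g \<in> hom D (Fo P) X. cmp D e g = f" using f'(1) by blast
qed

lemma transpose_hom_complex_exact:
  assumes C: "is_preadditive C" and D: "is_preadditive D"
    and P: "\<And>n. P n \<in> obj C" and d: "\<And>n. d n \<in> hom C (P n) (P (n + 1))"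
    and Q: "Q \<in> obj D" and exact: "hom_complex_exact C P d (Go Q)"
  shows "hom_complex_exact D (\<lambda>n. Fo (P n)) (\<lambda>n. Fm (d n)) Q"
  unfolding hom_complex_exact_def
proof (intro allI ballI impI)
  fix n f assume f: "f \<in> hom D (Fo (P n)) Q"
    and fd: "cmp D f (Fm (d (n - 1))) = zr D (Fo (P (n - 1))) Q"
  have d': "d (n - 1) \<in> hom C (P (n - 1)) (P n)" using d[of "n - 1"] by simp
  have FP: "\<And>n. Fo (P n) \<in> obj D" using is_functorD(1)[OF functor_F P] .
  have "cmp C (\<phi> (P n) Q f) (d (n - 1)) = \<phi> (P (n - 1)) Q (cmp D f (Fm (d (n - 1))))"
    using transpose_natural_left[OF P P Q d' f] by simp
  also have "\<dots> = zr C (P (n - 1)) (Go Q)" using fd transpose_zr[OF C D P Q] by simp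
  finally obtain g where g: "g \<in> hom C (P (n + 1)) (Go Q)" "\<phi> (P n) Q f = cmp C g (d n)"
    using exact transpose_closed[OF P Q f] unfolding hom_complex_exact_def by blast
  obtain g' where g': "g' \<in> hom D (Fo (P (n + 1))) Q" "\<phi> (P (n + 1)) Q g' = g"
    using transpose_surj[OF P Q g(1)] .
  have "\<phi> (P n) Q (cmp D g' (Fm (d n))) = \<phi> (P n) Q f"
    using transpose_natural_left[OF P P Q d g'(1)] g' g(2) by simp
  then have "cmp D g' (Fm (d n)) = f"
    using transpose_inj[OF P Q cat_comp_closed[OF cat_D FP FP Q is_functorD(2)[OF functor_F P P d] g'(1)] f]
    by simp
  then show "\<exists>g \<in> hom D (Fo (P (n + 1))) Q. f = cmp D g (Fm (d n))" using g'(1) by blast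
qed

lemma left_adjoint_preserves_totally_acyclic:
  assumes C: "is_abelian C" and D: "is_abelian D"
    and F: "exact_functor C D Fo Fm" and G: "exact_functor D C Go Gm"
    and G_proj: "\<And>Q. is_projective D Q \<Longrightarrow> is_projective C (Go Q)"
    and tac: "totally_acyclic C P d"
  shows "totally_acyclic D (\<lambda>n. Fo (P n)) (\<lambda>n. Fm (d n))"
proof -
  have P: "\<And>n. is_projective C (P n)" and d: "\<And>n. d n \<in> hom C (P n) (P (n + 1))"
    and ex: "\<And>n. exact_at C (P (n - 1)) (P n) (P (n + 1)) (d (n - 1)) (d n)"
    and hom_ex: "\<And>Q. is_projective C Q \<Longrightarrow> hom_complex_exact C P d Q"
    using tac unfolding totally_acyclic_def by blast+
  have Po: "\<And>n. P n \<in> obj C" using is_projectiveD(1)[OF P] .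
  show ?thesis unfolding totally_acyclic_def
  proof (intro conjI allI impI)
    fix n
    show "is_projective D (Fo (P n))"
      using left_adjoint_preserves_projective[OF exact_functor_epi[OF D C G] P] .
    show "Fm (d n) \<in> hom D (Fo (P n)) (Fo (P (n + 1)))" using is_functorD(2)[OF functor_F Po Po d] .
    show "exact_at D (Fo (P (n - 1))) (Fo (P n)) (Fo (P (n + 1))) (Fm (d (n - 1))) (Fm (d n))"
      using exact_functorD(2)[OF F ex] .
  next
    fix Q assume Q: "is_projective D Q"
    show "hom_complex_exact D (\<lambda>n. Fo (P n)) (\<lambda>n. Fm (d n)) Q"
      by (rule transpose_hom_complex_exact[OF abelian_preadditive[OF C] abelian_preadditive[OF D] Po d
            is_projectiveD(1)[OF Q] hom_ex[OF G_proj[OF Q]]])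
  qed
qed

lemma left_adjoint_preserves_gorenstein_projective:
  assumes C: "is_abelian C" and D: "is_abelian D"
    and F: "exact_functor C D Fo Fm" and G: "exact_functor D C Go Gm"
    and G_proj: "\<And>Q. is_projective D Q \<Longrightarrow> is_projective C (Go Q)"
    and X: "gorenstein_projective C X"
  shows "gorenstein_projective D (Fo X)"
proof -
  obtain P d k where tac: "totally_acyclic C P d" and k: "is_kernel C (d 0) (P 0) (P 1) k X"
    using X unfolding gorenstein_projective_iff_totally_acyclic by blast
  show ?thesis
    unfolding gorenstein_projective_iff_totally_acyclic
    using left_adjoint_preserves_totally_acyclic[OF C D F G G_proj tac] exact_functor_kernel[OF C D F k]
    by (intro exI conjI) simp_all
qed

end

section \<open>Gorenstein projective dimension\<close>

lemma gorenstein_projective_obj: "gorenstein_projective C X \<Longrightarrow> X \<in> obj C"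
  unfolding gorenstein_projective_def by (auto dest: is_kernelD(1))

lemma exact_functor_gpd_le:
  assumes C: "is_abelian C" and D: "is_abelian D" and F: "exact_functor C D Fo Fm"
    and F_gp: "\<And>X. gorenstein_projective C X \<Longrightarrow> gorenstein_projective D (Fo X)"
    and X: "X \<in> obj C" and gpd: "gpd_le C X n"
  shows "gpd_le D (Fo X) n"
proof -
  obtain S c where S0: "S 0 = X" and gp: "\<forall>i \<le> n. gorenstein_projective C (S (Suc i))"
    and c: "\<forall>j \<le> n. c j \<in> hom C (S (Suc j)) (S j)"
    and epi: "is_epi C (S 1) (S 0) (c 0)" and mono: "is_mono C (S (Suc n)) (S n) (c n)"
    and ex: "\<forall>j < n. exact_at C (S (j + 2)) (S (j + 1)) (S j) (c (j + 1)) (c j)"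
    using gpd unfolding gpd_le_def by auto
  have S: "S i \<in> obj C" if "i \<le> Suc n" for i
    using that S0 X gp by (cases i) (auto intro: gorenstein_projective_obj)
  show ?thesis unfolding gpd_le_def
  proof (intro exI[of _ "\<lambda>i. Fo (S i)"] exI[of _ "\<lambda>j. Fm (c j)"] conjI allI impI)
    show "Fo (S 0) = Fo X" using S0 by simp
    show "gorenstein_projective D (Fo (S (Suc i)))" if "i \<le> n" for i using that gp F_gp by blast
    show "Fm (c j) \<in> hom D (Fo (S (Suc j))) (Fo (S j))" if "j \<le> n" for j
      using that c is_functorD(2)[OF exact_functorD(1)[OF F] S S] by simp
    show "is_epi D (Fo (S 1)) (Fo (S 0)) (Fm (c 0))" using exact_functor_epi[OF C D F epi] .
    show "is_mono D (Fo (S (Suc n))) (Fo (S n)) (Fm (c n))" using exact_functor_mono[OF C D F mono] .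
    show "exact_at D (Fo (S (j + 2))) (Fo (S (j + 1))) (Fo (S j)) (Fm (c (j + 1))) (Fm (c j))"
      if "j < n" for j
      using that ex exact_functorD(2)[OF F] by blast
  qed
qed

lemma Gpd_mono: "(\<And>n. gpd_le C X n \<Longrightarrow> gpd_le D Y n) \<Longrightarrow> Gpd D Y \<le> Gpd C X"
  unfolding Gpd_def by (rule Inf_superset_mono) blast

theorem lemma3p6:
  fixes A :: "('o1, 'm1) cat" and B :: "('o2, 'm2) cat"
    and Fo :: "'o1 \<Rightarrow> 'o2" and Fm :: "'m1 \<Rightarrow> 'm2"
    and Go :: "'o2 \<Rightarrow> 'o1" and Gm :: "'m2 \<Rightarrow> 'm1"
  assumes "is_abelian A" and "is_abelian B"
    and "enough_projectives A" and "enough_projectives B"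
    and "left_adjoint A B Fo Fm Go Gm"
    and "exact_functor A B Fo Fm" and "exact_functor B A Go Gm"
    and "\<forall>P. is_projective B P \<longrightarrow> is_projective A (Go P)"
  shows "(\<forall>X \<in> obj A. Gpd B (Fo X) \<le> Gpd A X)
       \<and> (\<forall>X \<in> obj A. gorenstein_projective A X \<longrightarrow> gorenstein_projective B (Fo X))"
proof -
  have "is_category A" "is_category B"
    using assms(1,2) abelian_preadditive preadditive_category by blast+
  then obtain \<phi> where adj: "adjunction A B Fo Fm Go Gm \<phi>"
    using left_adjoint_imp_adjunction assms(5) by blast
  have gp: "\<And>X. gorenstein_projective A X \<Longrightarrow> gorenstein_projective B (Fo X)"
    using adjunction.left_adjoint_preserves_gorenstein_projective[OF adj assms(1,2,6,7)] assms(8) by blast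
  have "Gpd B (Fo X) \<le> Gpd A X" if "X \<in> obj A" for X
    by (rule Gpd_mono) (rule exact_functor_gpd_le[OF assms(1,2,6) gp that])
  with gp show ?thesis by blast
qed

end
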